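(* Let $\mathcal{X}$ be a real Hilbert space, let $d_1,d_2,d_3:\mathcal{X}\to(-\infty,+\infty]$ be proper closed convex functions and $\gamma>0$. Let $z^0\in\mathcal{X}$ and for $k=0,1,\dots$ define $w^k_{d_3}=\operatorname{prox}^\gamma_{d_3}(z^k)$; choose $\nabla d_2(w^k_{d_3})\in\partial d_2(w^k_{d_3})$; $w^k_{d_1}=\operatorname{prox}^\gamma_{d_1}\big(2w^k_{d_3}-z^k-\gamma\nabla d_2(w^k_{d_3})\big)$; $w^k_{d_2}=\operatorname{prox}^\gamma_{d_2}\big(w^k_{d_1}+\gamma\nabla d_2(w^k_{d_3})\big)$; $z^{k+1}=z^k+w^k_{d_2}-w^k_{d_3}$, and set $\nabla d_2(w^k_{d_2}):=\gamma^{-1}(w^k_{d_1}+\gamma\nabla d_2(w^k_{d_3})-w^k_{d_2})\in\partial d_2(w^k_{d_2})$. Let $w^*$ be a fixed point of this iteration (i.e. of the map $z^k\mapsto z^{k+1}$). Then for every $k\ge0$, $$\begin{aligned} &2\gamma\big(d_1(w^k_{d_1})+d_2(w^k_{d_3})+d_3(w^k_{d_3})-(d_1+d_2+d_3)(w^* )\big)\\ &\le \|z^k-w^*\|^2-\|z^k-z^{k+1}\|^2-\|z^{k+1}-w^*\|^2+2\gamma\langle\nabla d_2(w^k_{d_3})-\nabla d_2(w^k_{d_2}),z^k-w^*\rangle\\ &\quad-2\gamma\langle\nabla d_2(w^k_{d_3})-\nabla d_2(w^k_{d_2}),z^k-z^{k+1}\rangle+2\gamma\langle z^k-z^{k+1},\nabla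 d_2(w^k_{d_2})\rangle\\ &\quad+2\gamma^2\langle\nabla d_2(w^k_{d_3})-\nabla d_2(w^k_{d_2}),\nabla d_2(w^k_{d_2})\rangle. \end{aligned}$$
   Context: $\operatorname{prox}^\gamma_f(x)=\arg\min_{y}\big(f(y)+\frac{1}{2\gamma}\|y-x\|^2\big)$; one has $\tilde w=\operatorname{prox}^\gamma_f(w)$ iff $\gamma^{-1}(w-\tilde w)\in\partial f(\tilde w)$. The symbol $\nabla d_2(\cdot)$ denotes the specific subgradients indicated (gradients if $d_2$ is differentiable). *)

theory Defs
  imports "HOL-Analysis.Analysis" "HOL-Library.Extended_Real"
begin

definition epigraph_e :: "('a \<Rightarrow> ereal) \<Rightarrow> ('a \<times> real) set" where
  "epigraph_e f = {(x, r). f x \<le> ereal r}"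

definition proper_fun :: "('a \<Rightarrow> ereal) \<Rightarrow> bool" where
  "proper_fun f \<longleftrightarrow> (\<forall>x. f x \<noteq> -\<infinity>) \<and> (\<exists>x. f x \<noteq> \<infinity>)"

definition convex_fun :: "('a::real_vector \<Rightarrow> ereal) \<Rightarrow> bool" where
  "convex_fun f \<longleftrightarrow> convex (epigraph_e f)"

definition closed_fun :: "('a::topological_space \<Rightarrow> ereal) \<Rightarrow> bool" where
  "closed_fun f \<longleftrightarrow> closed (epigraph_e f)"

definition subdiff :: "('a::real_inner \<Rightarrow> ereal) \<Rightarrow> 'a \<Rightarrow> 'a set" where
  "subdiff f x = {g. \<forall>y. f x + ereal (inner g (y - x)) \<le> f y}"

text \<open>Proximal operator: the set of minimizers of f(y) + |y - x|^2/(2 gamma)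
  (a singleton for proper closed convex f on a Hilbert space).\<close>
definition prox :: "real \<Rightarrow> ('a::real_normed_vector \<Rightarrow> ereal) \<Rightarrow> 'a \<Rightarrow> 'a set" where
  "prox \<gamma> f x = {y. \<forall>u. f y + ereal ((norm (y - x))\<^sup>2 / (2 * \<gamma>))
                         \<le> f u + ereal ((norm (u - x))\<^sup>2 / (2 * \<gamma>))}"

end

theory Submission imports Defs begin

text \<open>Each update of the iteration yields a subgradient inequality at \<open>wstar\<close>: a proximal step
  \<open>y \<in> prox \<gamma> f x\<close> gives \<open>(x - y)/\<gamma> \<in> \<partial>f(y)\<close>, and \<open>g3 k \<in> \<partial>d2(w3 k)\<close> by choice.
  Adding the three inequalities for \<open>d1\<close>, \<open>d2\<close>, \<open>d3\<close> and multiplying by \<open>2\<gamma>\<close> bounds the left-hand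
  side by a bilinear expression in the iterates, which is identically equal to the right-hand side.\<close>

lemma convex_funD:
  assumes "convex_fun f" "f a = ereal p" "f b = ereal q" "0 \<le> t" "t \<le> 1"
  shows "f ((1 - t) *\<^sub>R a + t *\<^sub>R b) \<le> ereal ((1 - t) * p + t * q)"
proof -
  have "(a, p) \<in> epigraph_e f" "(b, q) \<in> epigraph_e f"
    using assms by (auto simp: epigraph_e_def)
  then have "(1 - t) *\<^sub>R (a, p) + t *\<^sub>R (b, q) \<in> epigraph_e f"
    using assms(1,4,5) unfolding convex_fun_def by (intro convexD) auto
  then show ?thesis by (simp add: epigraph_e_def)
qed

lemma proper_fun_not_MInfty: "proper_fun f \<Longrightarrow> f x \<noteq> -\<infinity>"
  by (simp add: proper_fun_def)

lemma proper_fun_subdiff_finite: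
  assumes "proper_fun f" "g \<in> subdiff f x"
  shows "\<bar>f x\<bar> \<noteq> \<infinity>"
proof -
  obtain x0 where "f x0 \<noteq> \<infinity>" using assms(1) by (auto simp: proper_fun_def)
  moreover have "f x + ereal (inner g (x0 - x)) \<le> f x0" using assms(2) by (simp add: subdiff_def)
  ultimately show ?thesis using proper_fun_not_MInfty[OF assms(1), of x] by auto
qed

lemma proper_fun_prox_finite:
  assumes "proper_fun f" "y \<in> prox \<gamma> f x"
  shows "\<bar>f y\<bar> \<noteq> \<infinity>"
proof -
  obtain x0 where "f x0 \<noteq> \<infinity>" using assms(1) by (auto simp: proper_fun_def)
  moreover have "f y + ereal ((norm (y - x))\<^sup>2 / (2 * \<gamma>)) \<le> f x0 + ereal ((norm (x0 - x))\<^sup>2 / (2 * \<gamma>))"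
    using assms(2) by (simp add: prox_def)
  ultimately show ?thesis using proper_fun_not_MInfty[OF assms(1)] by (cases "f y"; cases "f x0") auto
qed

lemma le_of_le_add_right_small_multiples:
  fixes a b c :: real
  assumes "\<And>t. 0 < t \<Longrightarrow> t \<le> 1 \<Longrightarrow> a \<le> b + t * c"
  shows "a \<le> b"
proof (rule tendsto_lowerbound)
  show "((\<lambda>t. b + t * c) \<longlongrightarrow> b) (at_right 0)"
    by (auto intro!: tendsto_eq_intros)
  show "\<forall>\<^sub>F t in at_right 0. a \<le> b + t * c"
    unfolding eventually_at_right_field by (auto intro!: exI[of _ 1] assms)
qed simp

lemma prox_subdiff:
  fixes f :: "'a::real_inner \<Rightarrow> ereal"
  assumes proper: "proper_fun f" and convex: "convex_fun f" and "\<gamma> > 0"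
    and y: "y \<in> prox \<gamma> f x"
  shows "(1 / \<gamma>) *\<^sub>R (x - y) \<in> subdiff f y"
  unfolding subdiff_def
proof (intro CollectI allI)
  fix u
  have y_min: "f y + ereal ((norm (y - x))\<^sup>2 / (2 * \<gamma>)) \<le> f v + ereal ((norm (v - x))\<^sup>2 / (2 * \<gamma>))"
    for v using y by (simp add: prox_def)
  obtain fy where fy: "f y = ereal fy"
    using proper_fun_prox_finite[OF proper y] by (cases "f y") auto
  show "f y + ereal (inner ((1 / \<gamma>) *\<^sub>R (x - y)) (u - y)) \<le> f u"
  proof (cases "f u")
    case (real fu)
    \<comment> \<open>compare \<open>y\<close> with the points \<open>y + t (u - y)\<close> of the segment towards \<open>u\<close>\<close>
    have "fy - fu \<le> inner (y - x) (u - y) / \<gamma> + t * ((norm (u - y))\<^sup>2 / (2 * \<gamma>))"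
      if t: "0 < t" "t \<le> 1" for t
    proof -
      define v where "v = (1 - t) *\<^sub>R y + t *\<^sub>R u"
      have "ereal (fy + (norm (y - x))\<^sup>2 / (2 * \<gamma>)) \<le> f v + ereal ((norm (v - x))\<^sup>2 / (2 * \<gamma>))"
        using y_min[of v] fy by simp
      also have "\<dots> \<le> ereal ((1 - t) * fy + t * fu) + ereal ((norm (v - x))\<^sup>2 / (2 * \<gamma>))"
        unfolding v_def using convex_funD[OF convex fy real] t by (intro add_right_mono) simp
      finally have v_not_better:
        "fy + (norm (y - x))\<^sup>2 / (2 * \<gamma>) \<le> (1 - t) * fy + t * fu + (norm (v - x))\<^sup>2 / (2 * \<gamma>)"
        by simp
      have v_x: "v - x = (y - x) + t *\<^sub>R (u - y)"
        by (simp add: v_def algebra_simps)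
      have "(norm (v - x))\<^sup>2 = (norm (y - x))\<^sup>2 + (2 * t * inner (y - x) (u - y) + t\<^sup>2 * (norm (u - y))\<^sup>2)"
        unfolding v_x power2_norm_eq_inner
        by (simp add: inner_add_left inner_add_right algebra_simps power2_eq_square inner_commute)
      then have "(norm (v - x))\<^sup>2 / (2 * \<gamma>) = (norm (y - x))\<^sup>2 / (2 * \<gamma>)
          + (2 * t * inner (y - x) (u - y) + t\<^sup>2 * (norm (u - y))\<^sup>2) / (2 * \<gamma>)"
        by (simp add: add_divide_distrib)
      then have "t * (fy - fu) \<le> (2 * t * inner (y - x) (u - y) + t\<^sup>2 * (norm (u - y))\<^sup>2) / (2 * \<gamma>)"
        using v_not_better by (simp add: algebra_simps)
      also have "\<dots> = t * (inner (y - x) (u - y) / \<gamma> + t * ((norm (u - y))\<^sup>2 / (2 * \<gamma>)))"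
        using \<open>\<gamma> > 0\<close> by (simp add: field_simps power2_eq_square)
      finally show ?thesis using t by simp
    qed
    then have "fy - fu \<le> inner (y - x) (u - y) / \<gamma>"
      by (rule le_of_le_add_right_small_multiples)
    moreover have "inner ((1 / \<gamma>) *\<^sub>R (x - y)) (u - y) = - (inner (y - x) (u - y) / \<gamma>)"
      by (simp add: inner_diff_left diff_divide_distrib)
    ultimately show ?thesis using fy real by simp
  qed (use fy proper_fun_not_MInfty[OF proper] in auto)
qed

lemma ereal_scaled_sum_le:
  fixes a1 a2 a3 b1 b2 b3 :: ereal and r1 r2 r3 c :: real
  assumes "a1 + ereal r1 \<le> b1" "a2 + ereal r2 \<le> b2" "a3 + ereal r3 \<le> b3"
    and "\<bar>a1\<bar> \<noteq> \<infinity>" "\<bar>a2\<bar> \<noteq> \<infinity>" "\<bar>a3\<bar> \<noteq> \<infinity>" and "c > 0"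
  shows "ereal c * (a1 + a2 + a3 - (b1 + b2 + b3)) \<le> ereal (- c * (r1 + r2 + r3))"
proof -
  obtain p1 p2 p3 where a: "a1 = ereal p1" "a2 = ereal p2" "a3 = ereal p3"
    using assms(4-6) by (cases a1; cases a2; cases a3) auto
  have b_not_MInfty: "b1 \<noteq> -\<infinity>" "b2 \<noteq> -\<infinity>" "b3 \<noteq> -\<infinity>"
    using assms(1-3) a by auto
  show ?thesis
  proof (cases "b1 = \<infinity> \<or> b2 = \<infinity> \<or> b3 = \<infinity>")
    case True
    with b_not_MInfty have b_sum: "b1 + b2 + b3 = \<infinity>" by auto
    show ?thesis unfolding b_sum a using \<open>c > 0\<close> by simp
  next
    case False
    then obtain q1 q2 q3 where b: "b1 = ereal q1" "b2 = ereal q2" "b3 = ereal q3"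
      using b_not_MInfty by (cases b1; cases b2; cases b3) auto
    have "c * (p1 + p2 + p3 - (q1 + q2 + q3)) \<le> c * (- (r1 + r2 + r3))"
      using assms(1-3) \<open>c > 0\<close> unfolding a b by (intro mult_left_mono) auto
    then show ?thesis unfolding a b by (simp add: algebra_simps)
  qed
qed

lemma splitting_step_identity:
  fixes z z' w1 w2 w3 g2 g3 s :: "'a::real_inner" and \<gamma> :: real
  assumes "\<gamma> \<noteq> 0" and z': "z' = z + w2 - w3" and g2: "g2 = (1 / \<gamma>) *\<^sub>R (w1 + \<gamma> *\<^sub>R g3 - w2)"
  shows "(norm (z - s))\<^sup>2 - (norm (z - z'))\<^sup>2 - (norm (z' - s))\<^sup>2
          + 2 * \<gamma> * inner (g3 - g2) (z - s)
          - 2 * \<gamma> * inner (g3 - g2) (z - z')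
          + 2 * \<gamma> * inner (z - z') g2
          + 2 * \<gamma>\<^sup>2 * inner (g3 - g2) g2
    = - 2 * \<gamma> * (inner ((1 / \<gamma>) *\<^sub>R (2 *\<^sub>R w3 - z - \<gamma> *\<^sub>R g3 - w1)) (s - w1)
                  + inner g3 (s - w3) + inner ((1 / \<gamma>) *\<^sub>R (z - w3)) (s - w3))"
    (is "?lhs = ?rhs")
proof -
  have \<gamma>_g2: "\<gamma> *\<^sub>R g2 = w1 + \<gamma> *\<^sub>R g3 - w2" using assms(1) by (simp add: g2)
  then have \<gamma>_g3_g2: "\<gamma> *\<^sub>R (g3 - g2) = w2 - w1" by (simp add: algebra_simps)
  have "2 * \<gamma> * inner (g3 - g2) (z - s) = 2 * inner (w2 - w1) (z - s)"
    by (metis \<gamma>_g3_g2 inner_scaleR_left mult.assoc)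
  moreover have "2 * \<gamma> * inner (g3 - g2) (z - z') = 2 * inner (w2 - w1) (z - z')"
    by (metis \<gamma>_g3_g2 inner_scaleR_left mult.assoc)
  moreover have "2 * \<gamma> * inner (z - z') g2 = 2 * inner (z - z') (w1 + \<gamma> *\<^sub>R g3 - w2)"
    by (metis \<gamma>_g2 inner_scaleR_right mult.assoc)
  moreover have "2 * \<gamma>\<^sup>2 * inner (g3 - g2) g2 = 2 * inner (w2 - w1) (w1 + \<gamma> *\<^sub>R g3 - w2)"
    by (metis \<gamma>_g2 \<gamma>_g3_g2 inner_scaleR_right inner_scaleR_left mult.assoc power2_eq_square)
  ultimately have "?lhs = 2 * inner (2 *\<^sub>R w3 - z - \<gamma> *\<^sub>R g3 - w1) (w1 - s)
      + 2 * \<gamma> * inner g3 (w3 - s) + 2 * inner (z - w3) (w3 - s)"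
    unfolding z' power2_norm_eq_inner
    by (simp add: inner_diff_left inner_diff_right inner_add_left inner_add_right algebra_simps inner_commute)
  also have "\<dots> = ?rhs"
    using assms(1) by (simp add: inner_diff_right algebra_simps)
  finally show ?thesis .
qed

theorem proposition4:
  fixes d1 d2 d3 :: "'a::{real_inner, complete_space} \<Rightarrow> ereal"
    and \<gamma> :: real
    and z w1 w2 w3 g3 :: "nat \<Rightarrow> 'a"
    and wstar :: 'a
    and k :: nat
  assumes d1: "proper_fun d1" "closed_fun d1" "convex_fun d1"
    and d2: "proper_fun d2" "closed_fun d2" "convex_fun d2"
    and d3: "proper_fun d3" "closed_fun d3" "convex_fun d3"
    and gam: "\<gamma> > 0"
    and it_w3: "\<And>k. w3 k \<in> prox \<gamma> d3 (z k)"
    and it_g3: "\<And>k. g3 k \<in> subdiff d2 (w3 k)"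
    and it_w1: "\<And>k. w1 k \<in> prox \<gamma> d1 (2 *\<^sub>R w3 k - z k - \<gamma> *\<^sub>R g3 k)"
    and it_w2: "\<And>k. w2 k \<in> prox \<gamma> d2 (w1 k + \<gamma> *\<^sub>R g3 k)"
    and it_z: "\<And>k. z (Suc k) = z k + w2 k - w3 k"
    and fixpt: "\<exists>a g b c. a \<in> prox \<gamma> d3 wstar \<and> g \<in> subdiff d2 a
                 \<and> b \<in> prox \<gamma> d1 (2 *\<^sub>R a - wstar - \<gamma> *\<^sub>R g)
                 \<and> c \<in> prox \<gamma> d2 (b + \<gamma> *\<^sub>R g)
                 \<and> wstar + c - a = wstar"
  shows "let g2 = (1 / \<gamma>) *\<^sub>R (w1 k + \<gamma> *\<^sub>R g3 k - w2 k) in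
     ereal (2 * \<gamma>) * (d1 (w1 k) + d2 (w3 k) + d3 (w3 k) - (d1 wstar + d2 wstar + d3 wstar))
     \<le> ereal ((norm (z k - wstar))\<^sup>2 - (norm (z k - z (Suc k)))\<^sup>2 - (norm (z (Suc k) - wstar))\<^sup>2
          + 2 * \<gamma> * inner (g3 k - g2) (z k - wstar)
          - 2 * \<gamma> * inner (g3 k - g2) (z k - z (Suc k))
          + 2 * \<gamma> * inner (z k - z (Suc k)) g2
          + 2 * \<gamma>\<^sup>2 * inner (g3 k - g2) g2)"
proof -
  define g2 where "g2 = (1 / \<gamma>) *\<^sub>R (w1 k + \<gamma> *\<^sub>R g3 k - w2 k)"
  have sub1: "(1 / \<gamma>) *\<^sub>R (2 *\<^sub>R w3 k - z k - \<gamma> *\<^sub>R g3 k - w1 k) \<in> subdiff d1 (w1 k)"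
    using prox_subdiff[OF d1(1) d1(3) gam it_w1] .
  have sub3: "(1 / \<gamma>) *\<^sub>R (z k - w3 k) \<in> subdiff d3 (w3 k)"
    using prox_subdiff[OF d3(1) d3(3) gam it_w3] .
  have "ereal (2 * \<gamma>) * (d1 (w1 k) + d2 (w3 k) + d3 (w3 k) - (d1 wstar + d2 wstar + d3 wstar))
      \<le> ereal (- (2 * \<gamma>) * (inner ((1 / \<gamma>) *\<^sub>R (2 *\<^sub>R w3 k - z k - \<gamma> *\<^sub>R g3 k - w1 k)) (wstar - w1 k)
                  + inner (g3 k) (wstar - w3 k) + inner ((1 / \<gamma>) *\<^sub>R (z k - w3 k)) (wstar - w3 k)))"
    using sub1 it_g3[of k] sub3 gam
    by (intro ereal_scaled_sum_le proper_fun_subdiff_finite[OF d1(1) sub1]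
        proper_fun_subdiff_finite[OF d2(1) it_g3] proper_fun_subdiff_finite[OF d3(1) sub3])
      (auto simp: subdiff_def)
  also have "\<dots> = ereal ((norm (z k - wstar))\<^sup>2 - (norm (z k - z (Suc k)))\<^sup>2 - (norm (z (Suc k) - wstar))\<^sup>2
          + 2 * \<gamma> * inner (g3 k - g2) (z k - wstar)
          - 2 * \<gamma> * inner (g3 k - g2) (z k - z (Suc k))
          + 2 * \<gamma> * inner (z k - z (Suc k)) g2
          + 2 * \<gamma>\<^sup>2 * inner (g3 k - g2) g2)"
    using splitting_step_identity[OF _ it_z g2_def] gam by simp
  finally show ?thesis unfolding g2_def Let_def .
qed

end
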